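(* For any integer $m\ge1$, the number of graphs on the vertex set $\{1,\dots,n\}$ that are intersection graphs of $n$ numbered axis-parallel boxes in $\mathbb{R}^m$ equals $n^{(2m+o(1))n}$.
   Context: An axis-parallel box in $\mathbb{R}^m$ is a set $\prod_{i=1}^m[\alpha_i,\beta_i]$ with $\alpha_i<\beta_i$. The intersection graph of objects $D_1,\dots,D_n$ is the graph on $\{1,\dots,n\}$ in which $i\neq j$ are adjacent iff $D_i\cap D_j\neq\emptyset$. "Equals $n^{(c+o(1))n}$" means equals $n^{(c+\varepsilon(n))n}$ for some function $\varepsilon(n)\to0$ as $n\to\infty$ (for fixed $m$). *)

theory Defs
  imports Complex_Main
begin

text \<open>Axis-parallel box in R^m given by lower corner a and upper corner b
  (coordinates 0..m-1). Points of R^m are represented as functions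
  nat => real, only coordinates i < m being constrained.\<close>
definition box_set :: "nat \<Rightarrow> (nat \<Rightarrow> real) \<Rightarrow> (nat \<Rightarrow> real) \<Rightarrow> (nat \<Rightarrow> real) set" where
  "box_set m a b = {x. \<forall>i<m. a i \<le> x i \<and> x i \<le> b i}"

definition nondeg_box :: "nat \<Rightarrow> (nat \<Rightarrow> real) \<Rightarrow> (nat \<Rightarrow> real) \<Rightarrow> bool" where
  "nondeg_box m a b \<longleftrightarrow> (\<forall>i<m. a i < b i)"

definition intersection_graph :: "nat \<Rightarrow> (nat \<Rightarrow> 'a set) \<Rightarrow> nat set set" where
  "intersection_graph n D =
     {{i, j} | i j. i \<in> {1..n} \<and> j \<in> {1..n} \<and> i \<noteq> j \<and> D i \<inter> D j \<noteq> {}}"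

definition box_graphs :: "nat \<Rightarrow> nat \<Rightarrow> nat set set set" where
  "box_graphs m n =
     {intersection_graph n (\<lambda>k. box_set m (a k) (b k)) | a b.
        \<forall>k\<in>{1..n}. nondeg_box m (a k) (b k)}"

end

theory Submission
  imports Defs "HOL-Library.FuncSet" "HOL-Real_Asymp.Real_Asymp"
begin

text \<open>Whether two boxes meet depends only on how, in each coordinate, the lower endpoint of
  each compares with the upper endpoint of the other. Replacing every endpoint by its rank
  among the at most \<open>2n\<close> endpoints in its coordinate therefore preserves the intersection
  graph, so there are at most \<open>(2n)^(2mn)\<close> box graphs.

  Conversely, fix \<open>t\<close> and let \<open>2tm\<close> of the boxes be thin slabs, \<open>2t\<close> parallel ones for each
  coordinate. Every other box may choose in each coordinate an interval \<open>[l, h]\<close> with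
  \<open>l \<le> t < h\<close>, and its neighbourhood among the slabs recovers all these choices; this gives
  \<open>t^(2m(n - 2tm))\<close> distinct graphs. Taking \<open>t \<approx> n / ln^2 n\<close>, both bounds are
  \<open>n^((2m + o(1)) n)\<close>.\<close>

lemma intersection_graph_cong:
  assumes "\<And>i j. i \<in> {1..n} \<Longrightarrow> j \<in> {1..n} \<Longrightarrow> D i \<inter> D j = {} \<longleftrightarrow> D' i \<inter> D' j = {}"
  shows "intersection_graph n D = intersection_graph n D'"
proof -
  have "(i \<in> {1..n} \<and> j \<in> {1..n} \<and> i \<noteq> j \<and> D i \<inter> D j \<noteq> {}) \<longleftrightarrow>
        (i \<in> {1..n} \<and> j \<in> {1..n} \<and> i \<noteq> j \<and> D' i \<inter> D' j \<noteq> {})" for i j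
    using assms by blast
  then show ?thesis unfolding intersection_graph_def by (simp only:)
qed

lemma doubleton_in_intersection_graph_iff:
  assumes "i \<in> {1..n}" "j \<in> {1..n}" "i \<noteq> j"
  shows "{i, j} \<in> intersection_graph n D \<longleftrightarrow> D i \<inter> D j \<noteq> {}"
  using assms by (auto simp: intersection_graph_def doubleton_eq_iff Int_commute)

lemma finite_box_graphs: "finite (box_graphs m n)"
proof (rule finite_subset)
  show "box_graphs m n \<subseteq> Pow (Pow {1..n})"
    unfolding box_graphs_def intersection_graph_def by auto
qed auto

lemma nondeg_box_imp_le: "nondeg_box m a b \<Longrightarrow> \<forall>c<m. a c \<le> b c"
  unfolding nondeg_box_def by (auto intro: less_imp_le)

lemma box_set_meet_iff:
  assumes "\<forall>c<m. a c \<le> b c" "\<forall>c<m. a' c \<le> b' c"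
  shows "box_set m a b \<inter> box_set m a' b' \<noteq> {} \<longleftrightarrow> (\<forall>c<m. a c \<le> b' c \<and> a' c \<le> b c)"
proof
  assume "box_set m a b \<inter> box_set m a' b' \<noteq> {}"
  then show "\<forall>c<m. a c \<le> b' c \<and> a' c \<le> b c"
    unfolding box_set_def by force
next
  assume "\<forall>c<m. a c \<le> b' c \<and> a' c \<le> b c"
  then have "(\<lambda>c. max (a c) (a' c)) \<in> box_set m a b \<inter> box_set m a' b'"
    using assms unfolding box_set_def by auto
  then show "box_set m a b \<inter> box_set m a' b' \<noteq> {}" by blast
qed

lemma intersection_graph_boxes_cong:
  assumes "\<forall>k\<in>{1..n}. \<forall>c<m. a k c \<le> b k c" "\<forall>k\<in>{1..n}. \<forall>c<m. a' k c \<le> b' k c"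
    and "\<And>i j c. i \<in> {1..n} \<Longrightarrow> j \<in> {1..n} \<Longrightarrow> c < m \<Longrightarrow> a i c \<le> b j c \<longleftrightarrow> a' i c \<le> b' j c"
  shows "intersection_graph n (\<lambda>k. box_set m (a k) (b k)) =
    intersection_graph n (\<lambda>k. box_set m (a' k) (b' k))"
proof (rule intersection_graph_cong)
  fix i j assume "i \<in> {1..n}" "j \<in> {1..n}"
  note ij = this
  have "box_set m (a i) (b i) \<inter> box_set m (a j) (b j) \<noteq> {} \<longleftrightarrow>
      (\<forall>c<m. a i c \<le> b j c \<and> a j c \<le> b i c)"
    using assms(1) ij by (intro box_set_meet_iff) auto
  also have "\<dots> \<longleftrightarrow> (\<forall>c<m. a' i c \<le> b' j c \<and> a' j c \<le> b' i c)"
    using assms(3) ij by auto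
  also have "\<dots> \<longleftrightarrow> box_set m (a' i) (b' i) \<inter> box_set m (a' j) (b' j) \<noteq> {}"
    using assms(2) ij by (intro box_set_meet_iff[symmetric]) auto
  finally show "box_set m (a i) (b i) \<inter> box_set m (a j) (b j) = {} \<longleftrightarrow>
      box_set m (a' i) (b' i) \<inter> box_set m (a' j) (b' j) = {}"
    by blast
qed

definition rank :: "'a::linorder set \<Rightarrow> 'a \<Rightarrow> nat" where
  "rank V v = card {u \<in> V. u < v}"

lemma rank_mono:
  assumes "finite V" "v \<le> w"
  shows "rank V v \<le> rank V w"
  unfolding rank_def using assms by (intro card_mono) auto

lemma rank_strict_mono:
  assumes "finite V" "v \<in> V" "v < w"
  shows "rank V v < rank V w"
  unfolding rank_def using assms by (intro psubset_card_mono) auto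

lemma rank_le_rank_iff:
  assumes "finite V" "v \<in> V" "w \<in> V"
  shows "rank V v \<le> rank V w \<longleftrightarrow> v \<le> w"
  using assms rank_mono[of V v w] rank_strict_mono[of V w v] by (metis leD not_le)

lemma rank_less_card:
  assumes "finite V" "v \<in> V"
  shows "rank V v < card V"
  unfolding rank_def using assms by (intro psubset_card_mono) auto

lemma box_graph_rank_realisation:
  assumes nd: "\<forall>k\<in>{1..n}. nondeg_box m (a k) (b k)"
  shows "\<exists>p\<in>{1..n} \<rightarrow>\<^sub>E {..<m} \<rightarrow>\<^sub>E {..<2*n}. \<exists>q\<in>{1..n} \<rightarrow>\<^sub>E {..<m} \<rightarrow>\<^sub>E {..<2*n}.
           intersection_graph n (\<lambda>k. box_set m (a k) (b k)) =
           intersection_graph n (\<lambda>k. box_set m (\<lambda>c. real (p k c)) (\<lambda>c. real (q k c)))"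
proof -
  define V where "V c = (\<lambda>k. a k c) ` {1..n} \<union> (\<lambda>k. b k c) ` {1..n}" for c
  define p where "p = (\<lambda>k\<in>{1..n}. \<lambda>c\<in>{..<m}. rank (V c) (a k c))"
  define q where "q = (\<lambda>k\<in>{1..n}. \<lambda>c\<in>{..<m}. rank (V c) (b k c))"
  have le: "\<forall>k\<in>{1..n}. \<forall>c<m. a k c \<le> b k c"
    using nd nondeg_box_imp_le by blast
  have fin: "finite (V c)" for c
    unfolding V_def by auto
  have card_V: "card (V c) \<le> 2*n" for c
  proof -
    have "card (V c) \<le> card ((\<lambda>k. a k c) ` {1..n}) + card ((\<lambda>k. b k c) ` {1..n})"
      unfolding V_def by (rule card_Un_le)
    also have "\<dots> \<le> n + n"
      by (intro add_mono order_trans[OF card_image_le]) auto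
    finally show ?thesis by simp
  qed
  have a_V: "a k c \<in> V c" and b_V: "b k c \<in> V c" if "k \<in> {1..n}" for k c
    using that unfolding V_def by auto
  have "rank (V c) (a k c) < 2*n" "rank (V c) (b k c) < 2*n" if "k \<in> {1..n}" for k c
    using rank_less_card[OF fin a_V[of k c]] rank_less_card[OF fin b_V[of k c]] card_V[of c] that
    by fastforce+
  then have "p \<in> {1..n} \<rightarrow>\<^sub>E {..<m} \<rightarrow>\<^sub>E {..<2*n}" "q \<in> {1..n} \<rightarrow>\<^sub>E {..<m} \<rightarrow>\<^sub>E {..<2*n}"
    unfolding p_def q_def by (simp_all add: restrict_PiE_iff)
  moreover have "intersection_graph n (\<lambda>k. box_set m (a k) (b k)) =
      intersection_graph n (\<lambda>k. box_set m (\<lambda>c. real (p k c)) (\<lambda>c. real (q k c)))"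
  proof (rule intersection_graph_boxes_cong)
    show "\<forall>k\<in>{1..n}. \<forall>c<m. real (p k c) \<le> real (q k c)"
      using le unfolding p_def q_def by (auto intro: rank_mono[OF fin])
    show "a i c \<le> b j c \<longleftrightarrow> real (p i c) \<le> real (q j c)"
      if "i \<in> {1..n}" "j \<in> {1..n}" "c < m" for i j c
      using that rank_le_rank_iff[OF fin a_V b_V] unfolding p_def q_def by simp
  qed (rule le)
  ultimately show ?thesis
    by blast
qed

lemma card_box_graphs_le: "card (box_graphs m n) \<le> (2*n) ^ (2*m*n)"
proof -
  let ?P = "{1..n} \<rightarrow>\<^sub>E {..<m} \<rightarrow>\<^sub>E {..<2*n}"
  let ?graph = "\<lambda>(p, q). intersection_graph n (\<lambda>k. box_set m (\<lambda>c. real (p k c)) (\<lambda>c. real (q k c)))"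
  have "box_graphs m n \<subseteq> ?graph ` (?P \<times> ?P)"
  proof
    fix G assume "G \<in> box_graphs m n"
    then obtain a b where G: "G = intersection_graph n (\<lambda>k. box_set m (a k) (b k))"
      and "\<forall>k\<in>{1..n}. nondeg_box m (a k) (b k)"
      unfolding box_graphs_def by blast
    then obtain p q where "p \<in> ?P" "q \<in> ?P" "G = ?graph (p, q)"
      using box_graph_rank_realisation by force
    then show "G \<in> ?graph ` (?P \<times> ?P)" by blast
  qed
  moreover have fin: "finite (?P \<times> ?P)"
    by (intro finite_cartesian_product finite_PiE) auto
  ultimately have "card (box_graphs m n) \<le> card (?P \<times> ?P)"
    by (meson card_image_le card_mono finite_imageI order_trans)
  also have "\<dots> = (2*n) ^ (m*n) * (2*n) ^ (m*n)"
    by (simp add: card_cartesian_product card_PiE power_mult)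
  also have "\<dots> = (2*n) ^ (2*m*n)"
    by (simp only: power_add[symmetric] mult_2[symmetric] mult.assoc)
  finally show ?thesis .
qed

text \<open>Vertex \<open>k = 2tc + j\<close> (\<open>c < m\<close>, \<open>1 \<le> j \<le> 2t\<close>) is the slab around \<open>j\<close> in coordinate \<open>c\<close>,
  spanning \<open>[0, 2t+1]\<close> in the other coordinates; a vertex \<open>k > 2tm\<close> has side \<open>[l, h]\<close> in
  coordinate \<open>c\<close>, where \<open>f k c = (l, h)\<close>.\<close>

definition lower_corner :: "nat \<Rightarrow> nat \<Rightarrow> (nat \<Rightarrow> nat \<Rightarrow> nat \<times> nat) \<Rightarrow> nat \<Rightarrow> nat \<Rightarrow> real" where
  "lower_corner t m f k c =
     (if k \<le> 2*t*m
      then (if c = (k-1) div (2*t) then real ((k-1) mod (2*t) + 1) - 1/4 else 0)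
      else real (fst (f k c)))"

definition upper_corner :: "nat \<Rightarrow> nat \<Rightarrow> (nat \<Rightarrow> nat \<Rightarrow> nat \<times> nat) \<Rightarrow> nat \<Rightarrow> nat \<Rightarrow> real" where
  "upper_corner t m f k c =
     (if k \<le> 2*t*m
      then (if c = (k-1) div (2*t) then real ((k-1) mod (2*t) + 1) + 1/4 else real (2*t+1))
      else real (snd (f k c)))"

definition interval_choices :: "nat \<Rightarrow> nat \<Rightarrow> nat \<Rightarrow> (nat \<Rightarrow> nat \<Rightarrow> nat \<times> nat) set" where
  "interval_choices t m n = {2*t*m+1..n} \<rightarrow>\<^sub>E {..<m} \<rightarrow>\<^sub>E {1..t} \<times> {t+1..2*t}"

definition choice_graph :: "nat \<Rightarrow> nat \<Rightarrow> nat \<Rightarrow> (nat \<Rightarrow> nat \<Rightarrow> nat \<times> nat) \<Rightarrow> nat set set" where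
  "choice_graph t m n f =
     intersection_graph n (\<lambda>k. box_set m (lower_corner t m f k) (upper_corner t m f k))"

lemma slab_vertex:
  fixes t c m j :: nat
  assumes "c < m" "j \<in> {1..2*t}"
  shows "1 \<le> c*(2*t) + j" "c*(2*t) + j \<le> 2*t*m"
    and "(c*(2*t) + j - 1) div (2*t) = c" "(c*(2*t) + j - 1) mod (2*t) + 1 = j"
proof -
  show "1 \<le> c*(2*t) + j" using assms by simp
  have "c*(2*t) + j \<le> (m-1)*(2*t) + 2*t"
    using assms by (intro add_mono mult_right_mono) auto
  also have "\<dots> = 2*t*m"
    using assms by (cases m) (auto simp: algebra_simps)
  finally show "c*(2*t) + j \<le> 2*t*m" .
  obtain i where i: "j = Suc i" "i < 2*t"
    using assms by (cases j) auto
  then have k: "c*(2*t) + j - 1 = i + (2*t)*c"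
    by simp
  show "(c*(2*t) + j - 1) div (2*t) = c" "(c*(2*t) + j - 1) mod (2*t) + 1 = j"
    unfolding k using i by auto
qed

lemma interval_choices_range:
  assumes "f \<in> interval_choices t m n" "2*t*m < k" "k \<le> n" "c < m"
  shows "fst (f k c) \<in> {1..t}" "snd (f k c) \<in> {t+1..2*t}"
proof -
  have "k \<in> {2*t*m+1..n}" "c \<in> {..<m}"
    using assms by auto
  then have "f k c \<in> {1..t} \<times> {t+1..2*t}"
    using assms(1) unfolding interval_choices_def by (blast dest: PiE_mem)
  then show "fst (f k c) \<in> {1..t}" "snd (f k c) \<in> {t+1..2*t}"
    by auto
qed

lemma nondeg_box_corners:
  assumes "f \<in> interval_choices t m n" "k \<in> {1..n}"
  shows "nondeg_box m (lower_corner t m f k) (upper_corner t m f k)"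
  unfolding nondeg_box_def
proof (intro allI impI)
  fix c assume "c < m"
  then show "lower_corner t m f k c < upper_corner t m f k c"
    using interval_choices_range[OF assms(1), of k c] assms(2)
    unfolding lower_corner_def upper_corner_def by auto
qed

lemma free_box_meets_slab_iff:
  assumes f: "f \<in> interval_choices t m n" and k: "2*t*m < k" "k \<le> n"
    and c: "c < m" and j: "j \<in> {1..2*t}"
  defines "v \<equiv> c*(2*t) + j"
  shows "box_set m (lower_corner t m f k) (upper_corner t m f k) \<inter>
         box_set m (lower_corner t m f v) (upper_corner t m f v) \<noteq> {}
     \<longleftrightarrow> fst (f k c) \<le> j \<and> j \<le> snd (f k c)"
proof -
  note v = slab_vertex[OF c j, folded v_def]
  have "k \<in> {1..n}" "v \<in> {1..n}"
    using v k by auto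
  note le = nondeg_box_imp_le[OF nondeg_box_corners[OF f]]
  have other: "lower_corner t m f k c' \<le> upper_corner t m f v c' \<and>
      lower_corner t m f v c' \<le> upper_corner t m f k c'" if "c' < m" "c' \<noteq> c" for c'
    using interval_choices_range[OF f k that(1)] v k that
    unfolding lower_corner_def upper_corner_def by auto
  have "lower_corner t m f k c \<le> upper_corner t m f v c \<and>
      lower_corner t m f v c \<le> upper_corner t m f k c
      \<longleftrightarrow> real (fst (f k c)) \<le> real j + 1/4 \<and> real j - 1/4 \<le> real (snd (f k c))"
    using v k unfolding lower_corner_def upper_corner_def by auto
  also have "\<dots> \<longleftrightarrow> fst (f k c) \<le> j \<and> j \<le> snd (f k c)"
    by linarith
  finally show ?thesis
    using box_set_meet_iff[OF le le] \<open>k \<in> {1..n}\<close> \<open>v \<in> {1..n}\<close> other c by metis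
qed

lemma interval_choice_from_graph:
  assumes f: "f \<in> interval_choices t m n" and k: "2*t*m < k" "k \<le> n" and c: "c < m"
  shows "{fst (f k c)..snd (f k c)} =
    {j \<in> {1..2*t}. {k, c*(2*t) + j} \<in> choice_graph t m n f}"
proof -
  have "{k, c*(2*t) + j} \<in> choice_graph t m n f \<longleftrightarrow> fst (f k c) \<le> j \<and> j \<le> snd (f k c)"
    if j: "j \<in> {1..2*t}" for j
  proof -
    note v = slab_vertex[OF c j]
    have "k \<in> {1..n}" "c*(2*t) + j \<in> {1..n}" "k \<noteq> c*(2*t) + j"
      using v k by auto
    then show ?thesis
      unfolding choice_graph_def using free_box_meets_slab_iff[OF f k c j]
      by (simp add: doubleton_in_intersection_graph_iff)
  qed
  moreover have "{fst (f k c)..snd (f k c)} \<subseteq> {1..2*t}"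
    using interval_choices_range[OF f k c] by auto
  ultimately show ?thesis
    by auto
qed

lemma inj_on_choice_graph: "inj_on (choice_graph t m n) (interval_choices t m n)"
proof
  fix f g assume f: "f \<in> interval_choices t m n" and g: "g \<in> interval_choices t m n"
    and eq: "choice_graph t m n f = choice_graph t m n g"
  have same: "f k c = g k c" if "k \<in> {2*t*m+1..n}" "c < m" for k c
  proof -
    from that have k: "2*t*m < k" "k \<le> n"
      by auto
    have "{fst (f k c)..snd (f k c)} = {fst (g k c)..snd (g k c)}"
      unfolding interval_choice_from_graph[OF f k \<open>c < m\<close>]
        interval_choice_from_graph[OF g k \<open>c < m\<close>] eq ..
    moreover have "fst (f k c) \<le> snd (f k c)"
      using interval_choices_range[OF f k \<open>c < m\<close>] by auto
    ultimately show "f k c = g k c"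
      by (simp add: Icc_eq_Icc prod_eq_iff)
  qed
  note f' = f[unfolded interval_choices_def] and g' = g[unfolded interval_choices_def]
  show "f = g"
  proof (rule PiE_ext[OF f' g'])
    fix k assume k: "k \<in> {2*t*m+1..n}"
    show "f k = g k"
      by (rule PiE_ext[OF PiE_mem[OF f' k] PiE_mem[OF g' k]]) (simp add: same[OF k])
  qed
qed

lemma card_box_graphs_ge:
  assumes "2*t*m \<le> n"
  shows "t ^ (2*m*(n - 2*t*m)) \<le> card (box_graphs m n)"
proof -
  have "choice_graph t m n ` interval_choices t m n \<subseteq> box_graphs m n"
    unfolding box_graphs_def choice_graph_def using nondeg_box_corners by blast
  moreover note finite_box_graphs
  ultimately have "card (interval_choices t m n) \<le> card (box_graphs m n)"
    using card_image[OF inj_on_choice_graph] card_mono by metis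
  moreover have "card (interval_choices t m n) = t ^ (2*m*(n - 2*t*m))"
    unfolding interval_choices_def
    by (simp add: card_PiE card_cartesian_product power_mult[symmetric] power2_eq_square[symmetric]
        mult.assoc)
  ultimately show ?thesis
    by simp
qed

lemma card_box_graphs_pos: "0 < card (box_graphs m n)"
proof -
  have "intersection_graph n (\<lambda>k. box_set m (\<lambda>_. 0) (\<lambda>_. 1)) \<in> box_graphs m n"
    unfolding box_graphs_def nondeg_box_def by force
  then show ?thesis
    using finite_box_graphs card_gt_0_iff by blast
qed

lemma card_box_graphs_one: "card (box_graphs m 1) = 1"
proof -
  have "box_graphs m 1 \<subseteq> {{}}"
    unfolding box_graphs_def intersection_graph_def by auto
  moreover have "box_graphs m 1 \<noteq> {}"
    using card_box_graphs_pos[of m 1] by force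
  ultimately have "box_graphs m 1 = {{}}"
    by blast
  then show ?thesis
    by simp
qed

lemma ln_card_box_graphs_le:
  assumes "n \<ge> 1"
  shows "ln (card (box_graphs m n)) \<le> 2 * real m * real n * ln (2 * real n)"
proof -
  have "real (card (box_graphs m n)) \<le> real ((2*n) ^ (2*m*n))"
    using card_box_graphs_le by (simp only: of_nat_le_iff)
  then have "ln (card (box_graphs m n)) \<le> ln (real ((2*n) ^ (2*m*n)))"
    using card_box_graphs_pos by (intro ln_mono) simp_all
  also have "\<dots> = real (2*m*n) * ln (2 * real n)"
    using assms by (subst of_nat_power, subst ln_realpow) auto
  finally show ?thesis
    by simp
qed

lemma ln_card_box_graphs_ge:
  fixes x :: real
  assumes x: "2 \<le> x" and n: "2 * real m * x \<le> real n"
  shows "2 * real m * (real n - 2 * real m * x) * ln (x - 1) \<le> ln (card (box_graphs m n))"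
proof -
  define t where "t = nat \<lfloor>x\<rfloor>"
  have t: "x - 1 < real t" "real t \<le> x"
    unfolding t_def using x by linarith+
  then have "real (2*t*m) \<le> 2 * real m * x"
    using mult_right_mono[OF t(2), of "real m"] by (simp add: mult.commute)
  then have tm: "2*t*m \<le> n"
    using n by linarith
  have slack: "real n - 2 * real m * x \<le> real (n - 2*t*m)"
    using of_nat_diff[OF tm] \<open>real (2*t*m) \<le> 2 * real m * x\<close> by linarith
  have "2 * real m * (real n - 2 * real m * x) \<le> real (2*m*(n - 2*t*m))"
    using slack by (simp add: mult_left_mono)
  moreover have "ln (x - 1) \<le> ln (real t)"
    using x t by (intro ln_mono) auto
  ultimately have "2 * real m * (real n - 2 * real m * x) * ln (x - 1)
      \<le> real (2*m*(n - 2*t*m)) * ln (real t)"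
    using x n by (intro mult_mono) auto
  also have "\<dots> = ln (real (t ^ (2*m*(n - 2*t*m))))"
    by (simp add: ln_realpow)
  also have "\<dots> \<le> ln (card (box_graphs m n))"
    using card_box_graphs_ge[OF tm] t x by (intro ln_mono) simp_all
  finally show ?thesis .
qed

lemma ln_card_box_graphs_asymp:
  "(\<lambda>n. ln (card (box_graphs m n)) / (real n * ln (real n))) \<longlonglongrightarrow> 2 * real m"
proof (rule tendsto_sandwich)
  \<comment> \<open>With \<open>t \<approx> x n\<close> slabs per coordinate, only a fraction \<open>O(1 / ln^2 n)\<close> of the boxes is
    lost to slabs, while still \<open>ln t = (1 - o(1)) ln n\<close>.\<close>
  define x where "x n = real n / ln (real n) ^ 2" for n :: nat
  have large: "\<forall>\<^sub>F n in sequentially. 3 \<le> n \<and> 2 \<le> x n \<and> 2 * real m \<le> ln (real n) ^ 2"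
  proof -
    have "filterlim (\<lambda>n::nat. ln (real n) ^ 2) at_top sequentially"
      by real_asymp
    then have "\<forall>\<^sub>F n in sequentially. 2 * real m \<le> ln (real n) ^ 2"
      by (simp add: filterlim_at_top)
    moreover have "\<forall>\<^sub>F n in sequentially. 2 \<le> x n"
      unfolding x_def by real_asymp
    ultimately show ?thesis
      using eventually_ge_at_top[of 3] by eventually_elim auto
  qed
  then show "\<forall>\<^sub>F n in sequentially.
      2 * real m * (1 - 2 * real m / ln (real n) ^ 2) * (ln (x n - 1) / ln (real n))
        \<le> ln (card (box_graphs m n)) / (real n * ln (real n))"
  proof eventually_elim
    case (elim n)
    then have ln_pos: "0 < ln (real n)"
      by simp
    have "2 * real m * x n \<le> real n"
      using elim ln_pos by (simp add: x_def field_simps)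
    with elim have "2 * real m * (real n - 2 * real m * x n) * ln (x n - 1)
        \<le> ln (card (box_graphs m n))"
      by (intro ln_card_box_graphs_ge) auto
    then have "2 * real m * (real n - 2 * real m * x n) * ln (x n - 1) / (real n * ln (real n))
        \<le> ln (card (box_graphs m n)) / (real n * ln (real n))"
      using ln_pos by (intro divide_right_mono) simp_all
    moreover have "2 * real m * (real n - 2 * real m * x n) * ln (x n - 1) / (real n * ln (real n)) =
        2 * real m * (1 - 2 * real m / ln (real n) ^ 2) * (ln (x n - 1) / ln (real n))"
      using elim ln_pos by (simp add: x_def field_simps power2_eq_square)
    ultimately show ?case
      by simp
  qed
  show "\<forall>\<^sub>F n in sequentially.
      ln (card (box_graphs m n)) / (real n * ln (real n)) \<le> 2 * real m * (ln (2 * real n) / ln (real n))"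
    using eventually_ge_at_top[of 2]
  proof eventually_elim
    case (elim n)
    then have "ln (card (box_graphs m n)) / (real n * ln (real n))
        \<le> 2 * real m * real n * ln (2 * real n) / (real n * ln (real n))"
      using ln_card_box_graphs_le[of n m] by (intro divide_right_mono) simp_all
    also have "\<dots> = 2 * real m * (ln (2 * real n) / ln (real n))"
      using elim by simp
    finally show ?case .
  qed
  show "(\<lambda>n. 2 * real m * (1 - 2 * real m / ln (real n) ^ 2) * (ln (x n - 1) / ln (real n)))
      \<longlonglongrightarrow> 2 * real m"
    unfolding x_def by real_asymp
  show "(\<lambda>n. 2 * real m * (ln (2 * real n) / ln (real n))) \<longlonglongrightarrow> 2 * real m"
    by real_asymp
qed

lemma powr_representation_of_log_ratio:
  fixes C :: "nat \<Rightarrow> real"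
  assumes one: "C 1 = 1" and pos: "\<And>n. n \<ge> 1 \<Longrightarrow> 0 < C n"
    and lim: "(\<lambda>n. ln (C n) / (real n * ln (real n))) \<longlonglongrightarrow> L"
  shows "\<exists>\<epsilon>. \<epsilon> \<longlonglongrightarrow> 0 \<and> (\<forall>n\<ge>1. C n = real n powr ((L + \<epsilon> n) * real n))"
proof -
  define \<epsilon> where "\<epsilon> n = ln (C n) / (real n * ln (real n)) - L" for n
  have "\<epsilon> \<longlonglongrightarrow> 0"
    unfolding \<epsilon>_def using lim by (rule LIM_zero)
  moreover have "C n = real n powr ((L + \<epsilon> n) * real n)" if "n \<ge> 1" for n
  proof (cases "n = 1")
    case True
    then show ?thesis
      using one by simp
  next
    case False
    with that have "0 < ln (real n)"
      by simp
    then have "(L + \<epsilon> n) * real n * ln (real n) = ln (C n)"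
      using that by (simp add: \<epsilon>_def field_simps)
    then show ?thesis
      using pos[OF that] that by (simp add: powr_def)
  qed
  ultimately show ?thesis
    by blast
qed

theorem corollary2p8:
  fixes m :: nat
  assumes "m \<ge> 1"
  shows "\<exists>\<epsilon> :: nat \<Rightarrow> real. \<epsilon> \<longlonglongrightarrow> 0 \<and>
           (\<forall>n\<ge>1. real (card (box_graphs m n)) = real n powr ((2 * real m + \<epsilon> n) * real n))"
  using card_box_graphs_one card_box_graphs_pos ln_card_box_graphs_asymp
  by (intro powr_representation_of_log_ratio) simp_all

end
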